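(* Let $S$ be an abelian group and let $\{G_j\}_{j\in J}$ be the family of all proper subgroups of $S$. Then for every left $S$-act $A$, the geometric equivalence class $[A]=\{B: B\overset{\triangle}{\sim}A\}$ has a representation of exactly one of the following three types: (i) $[A]=\big[\coprod_{k\in K}\overline{G_k}\big]$ for some $K\subseteq J$; (ii) $[A]=\big[\coprod_{k\in K}\overline{G_k}\amalg z\big]$ for some $K\subseteq J$; (iii) $[A]=\big[\coprod_{k\in K}\overline{G_k}\amalg z_1\amalg z_2\big]$ for some $K\subseteq J$. (That is, $A$ is geometrically equivalent to an $S$-act of one of these forms, and $[A]$ does not admit representations of two different types.)
   Context: For a monoid $S$, a left $S$-act is a nonempty set $A$ with a map $S\times A\to A$, $(s,a)\mapsto sa$, such that $1a=a$ and $(st)a=s(ta)$; homomorphisms are maps $f$ with $f(sa)=sf(a)$. Coproducts $\amalg$ of $S$-acts are disjoint unions with the induced action. For a nonempty finite set $X$, $F_X=\coprod_{x\in X}S_x$ is the free $S$-act on $X$ (a disjoint union of copies of the left regular act ${}_SS$). For an $S$-act $G$ and a relation $T\subseteq F_X\times F_X$, let $T'_G=\{\mu:F_X\to G \text{ homomorphism}: T\subseteq\ker\mu\}$ and $T''_G=\bigcap_{\mu\in T'_G}\ker\mu$ (empty intersection $=F_X\times F_X$). $G_1\overset{\triangle}{\sim}G_2$ (geometric equivalence) iff $T''_{G_1}=T''_{G_2}$ for every nonempty finite $X$ and every $T\subseteq F_X\times F_X$. For a subgroup $H$ of $S$, $\overline{H}=S/H$ is the $S$-act of cosets $tH$ with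 $s\cdot tH=stH$. The symbols $z,z_1,z_2$ denote one-element $S$-acts. *)

theory Defs
  imports "HOL-Algebra.Coset"
begin

definition is_act :: "('s,'m) monoid_scheme \<Rightarrow> 'a set \<Rightarrow> ('s \<Rightarrow> 'a \<Rightarrow> 'a) \<Rightarrow> bool" where
  "is_act S A f \<longleftrightarrow> A \<noteq> {}
     \<and> (\<forall>s\<in>carrier S. \<forall>a\<in>A. f s a \<in> A)
     \<and> (\<forall>a\<in>A. f \<one>\<^bsub>S\<^esub> a = a)
     \<and> (\<forall>s\<in>carrier S. \<forall>t\<in>carrier S. \<forall>a\<in>A. f (s \<otimes>\<^bsub>S\<^esub> t) a = f s (f t a))"

definition is_act_hom :: "('s,'m) monoid_scheme \<Rightarrow> 'a set \<Rightarrow> ('s \<Rightarrow> 'a \<Rightarrow> 'a)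
    \<Rightarrow> 'b set \<Rightarrow> ('s \<Rightarrow> 'b \<Rightarrow> 'b) \<Rightarrow> ('a \<Rightarrow> 'b) \<Rightarrow> bool" where
  "is_act_hom S A f B g \<mu> \<longleftrightarrow> (\<forall>a\<in>A. \<mu> a \<in> B) \<and> (\<forall>s\<in>carrier S. \<forall>a\<in>A. \<mu> (f s a) = g s (\<mu> a))"

text \<open>Free act F_X on a finite set X (of naturals): disjoint union of copies of S.\<close>
definition free_carrier :: "('s,'m) monoid_scheme \<Rightarrow> nat set \<Rightarrow> (nat \<times> 's) set" where
  "free_carrier S X = X \<times> carrier S"

definition free_action :: "('s,'m) monoid_scheme \<Rightarrow> 's \<Rightarrow> nat \<times> 's \<Rightarrow> nat \<times> 's" where
  "free_action S s p = (fst p, s \<otimes>\<^bsub>S\<^esub> snd p)"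

definition act_ker :: "('s,'m) monoid_scheme \<Rightarrow> nat set \<Rightarrow> (nat \<times> 's \<Rightarrow> 'b) \<Rightarrow> ((nat \<times> 's) \<times> (nat \<times> 's)) set" where
  "act_ker S X \<mu> = {(p,q). p \<in> free_carrier S X \<and> q \<in> free_carrier S X \<and> \<mu> p = \<mu> q}"

definition T_prime :: "('s,'m) monoid_scheme \<Rightarrow> 'b set \<Rightarrow> ('s \<Rightarrow> 'b \<Rightarrow> 'b) \<Rightarrow> nat set
    \<Rightarrow> ((nat \<times> 's) \<times> (nat \<times> 's)) set \<Rightarrow> (nat \<times> 's \<Rightarrow> 'b) set" where
  "T_prime S G g X T = {\<mu>. is_act_hom S (free_carrier S X) (free_action S) G g \<mu> \<and> T \<subseteq> act_ker S X \<mu>}"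

text \<open>T''_G: intersection of kernels (empty intersection = F_X x F_X).\<close>
definition T_dprime :: "('s,'m) monoid_scheme \<Rightarrow> 'b set \<Rightarrow> ('s \<Rightarrow> 'b \<Rightarrow> 'b) \<Rightarrow> nat set
    \<Rightarrow> ((nat \<times> 's) \<times> (nat \<times> 's)) set \<Rightarrow> ((nat \<times> 's) \<times> (nat \<times> 's)) set" where
  "T_dprime S G g X T = (free_carrier S X \<times> free_carrier S X) \<inter> (\<Inter>\<mu>\<in>T_prime S G g X T. act_ker S X \<mu>)"

definition geom_equiv :: "('s,'m) monoid_scheme \<Rightarrow> 'a set \<Rightarrow> ('s \<Rightarrow> 'a \<Rightarrow> 'a)
    \<Rightarrow> 'b set \<Rightarrow> ('s \<Rightarrow> 'b \<Rightarrow> 'b) \<Rightarrow> bool" where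
  "geom_equiv S A f B g \<longleftrightarrow> (\<forall>X::nat set. finite X \<and> X \<noteq> {} \<longrightarrow>
     (\<forall>T. T \<subseteq> free_carrier S X \<times> free_carrier S X \<longrightarrow> T_dprime S A f X T = T_dprime S B g X T))"

definition proper_subgroups :: "('s,'m) monoid_scheme \<Rightarrow> 's set set" where
  "proper_subgroups S = {H. subgroup H S \<and> H \<noteq> carrier S}"

text \<open>The act  (coproduct over H in K of S/H)  amalg n one-element acts (n = 0,1,2).
  Element Inl (H, tH) is the coset tH in the copy indexed by H; Inr i is the i-th one-point act.\<close>
definition rep_carrier :: "('s,'m) monoid_scheme \<Rightarrow> 's set set \<Rightarrow> nat \<Rightarrow> ('s set \<times> 's set + nat) set" where
  "rep_carrier S K n = {Inl (H, t <#\<^bsub>S\<^esub> H) | H t. H \<in> K \<and> t \<in> carrier S} \<union> Inr ` {..<n}"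

definition rep_action :: "('s,'m) monoid_scheme \<Rightarrow> 's \<Rightarrow> 's set \<times> 's set + nat \<Rightarrow> 's set \<times> 's set + nat" where
  "rep_action S s x = (case x of Inl (H, C) \<Rightarrow> Inl (H, s <#\<^bsub>S\<^esub> C) | Inr i \<Rightarrow> Inr i)"

end

theory Submission
  imports Defs
begin

text \<open>
  Over a group the orbit of a point \<open>a\<close> of an act is a copy of \<open>S/Stab(a)\<close>, so a map defined on
  orbit representatives extends to a homomorphism as soon as it does not shrink stabilizers.
  Hence an act \<open>A\<close> over an abelian group and the act \<open>\<Coprod>\<^sub>H S/H \<amalg> n points\<close>, where \<open>H\<close>
  runs over the stabilizers of the non-fixed points of \<open>A\<close> and \<open>n\<close> is the number of fixed points
  capped at 2, separate each other's points by homomorphisms; this makes them geometrically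
  equivalent. Conversely, \<open>T''\<close> of the relations forcing one or two free generators onto fixed
  points detects whether an act has no fixed point and whether it has at most one. The fixed
  points of \<open>\<Coprod>\<^sub>H S/H \<amalg> n points\<close> are exactly its \<open>n\<close> one-point summands, so \<open>n\<close> is an
  invariant of the geometric equivalence class.
\<close>

section \<open>Orbits, stabilizers and homomorphisms of acts over a group\<close>

lemma is_actD:
  assumes "is_act S A f"
  shows is_act_closed: "\<And>s a. s \<in> carrier S \<Longrightarrow> a \<in> A \<Longrightarrow> f s a \<in> A"
    and is_act_one: "\<And>a. a \<in> A \<Longrightarrow> f \<one>\<^bsub>S\<^esub> a = a"
    and is_act_mult: "\<And>s t a. s \<in> carrier S \<Longrightarrow> t \<in> carrier S \<Longrightarrow> a \<in> A
                        \<Longrightarrow> f (s \<otimes>\<^bsub>S\<^esub> t) a = f s (f t a)"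
    and is_act_nonempty: "A \<noteq> {}"
  using assms unfolding is_act_def by auto

definition act_orbit :: "('s,'m) monoid_scheme \<Rightarrow> ('s \<Rightarrow> 'a \<Rightarrow> 'a) \<Rightarrow> 'a \<Rightarrow> 'a set" where
  "act_orbit S f a = (\<lambda>s. f s a) ` carrier S"

definition act_stabilizer :: "('s,'m) monoid_scheme \<Rightarrow> ('s \<Rightarrow> 'a \<Rightarrow> 'a) \<Rightarrow> 'a \<Rightarrow> 's set" where
  "act_stabilizer S f a = {s \<in> carrier S. f s a = a}"

definition act_fixed_points :: "('s,'m) monoid_scheme \<Rightarrow> 'a set \<Rightarrow> ('s \<Rightarrow> 'a \<Rightarrow> 'a) \<Rightarrow> 'a set" where
  "act_fixed_points S A f = {a \<in> A. \<forall>s\<in>carrier S. f s a = a}"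

lemma act_fixed_points_iff_stabilizer:
  "a \<in> act_fixed_points S A f \<longleftrightarrow> a \<in> A \<and> act_stabilizer S f a = carrier S"
  unfolding act_fixed_points_def act_stabilizer_def by auto

context
  fixes S (structure) and A f
  assumes group: "group S" and act: "is_act S A f"
begin

interpretation group S by (rule group)

lemma act_inv_cancel: "s \<in> carrier S \<Longrightarrow> a \<in> A \<Longrightarrow> f (inv s) (f s a) = a"
  using is_act_mult[OF act, of "inv s" s a] is_act_one[OF act, of a] by simp

lemma act_orbit_refl: "a \<in> A \<Longrightarrow> a \<in> act_orbit S f a"
  unfolding act_orbit_def using is_act_one[OF act] by (metis image_eqI one_closed)

lemma act_orbit_subset: "a \<in> A \<Longrightarrow> act_orbit S f a \<subseteq> A"
  unfolding act_orbit_def using is_act_closed[OF act] by auto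

lemma act_orbit_sym:
  assumes "a \<in> A" "b \<in> act_orbit S f a"
  shows "a \<in> act_orbit S f b"
proof -
  obtain s where "s \<in> carrier S" "b = f s a" using assms(2) unfolding act_orbit_def by auto
  then show ?thesis
    unfolding act_orbit_def using act_inv_cancel assms(1)
      by (auto intro!: image_eqI[of _ _ "inv s"])
qed

lemma act_orbit_trans:
  assumes "a \<in> A" "b \<in> act_orbit S f a" "c \<in> act_orbit S f b"
  shows "c \<in> act_orbit S f a"
proof -
  obtain s t where "s \<in> carrier S" "b = f s a" "t \<in> carrier S" "c = f t b"
    using assms(2,3) unfolding act_orbit_def by auto
  then have "c = f (t \<otimes> s) a" using is_act_mult[OF act] assms(1) by simp
  then show ?thesis unfolding act_orbit_def using \<open>s \<in> carrier S\<close> \<open>t \<in> carrier S\<close> by auto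
qed

lemma act_orbit_eq: "a \<in> A \<Longrightarrow> b \<in> act_orbit S f a \<Longrightarrow> act_orbit S f b = act_orbit S f a"
  using act_orbit_trans act_orbit_sym act_orbit_subset by blast

lemma act_stabilizer_subgroup: "a \<in> A \<Longrightarrow> subgroup (act_stabilizer S f a) S"
  by (rule subgroupI)
    (auto simp: act_stabilizer_def is_act_mult[OF act] is_act_one[OF act] dest: act_inv_cancel)

lemma exists_orbit_transversal:
  assumes "P \<subseteq> A" and transversal: "\<forall>p\<in>P. \<forall>q\<in>P. q \<in> act_orbit S f p \<longrightarrow> q = p"
  obtains r where "\<And>a. a \<in> A \<Longrightarrow> r a \<in> act_orbit S f a"
    and "\<And>a s. a \<in> A \<Longrightarrow> s \<in> carrier S \<Longrightarrow> r (f s a) = r a"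
    and "\<And>p. p \<in> P \<Longrightarrow> r p = p"
proof -
  define r where
    "r a = (SOME p. p \<in> act_orbit S f a \<and> (act_orbit S f a \<inter> P \<noteq> {} \<longrightarrow> p \<in> P))" for a
  have r: "r a \<in> act_orbit S f a \<and> (act_orbit S f a \<inter> P \<noteq> {} \<longrightarrow> r a \<in> P)" if "a \<in> A" for a
    unfolding r_def by (rule someI_ex) (use act_orbit_refl[OF that] in blast)
  have r_invariant: "r (f s a) = r a" if "a \<in> A" "s \<in> carrier S" for a s
  proof -
    have "f s a \<in> act_orbit S f a" unfolding act_orbit_def using that(2) by blast
    then show ?thesis unfolding r_def using act_orbit_eq[OF that(1)] by simp
  qed
  have "r p = p" if p: "p \<in> P" for p
  proof -
    have pA: "p \<in> A" using p assms(1) by blast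
    then have "r p \<in> P" "r p \<in> act_orbit S f p" using r act_orbit_refl p by blast+
    then show ?thesis using transversal p act_orbit_sym[OF pA] by blast
  qed
  then show thesis using that r r_invariant by blast
qed

lemma act_hom_value_respects_action:
  assumes actB: "is_act S B g" and x: "x \<in> A" and y: "y \<in> B"
    and stab: "act_stabilizer S f x \<subseteq> act_stabilizer S g y"
    and s: "s \<in> carrier S" and t: "t \<in> carrier S" and eq: "f s x = f t x"
  shows "g s y = g t y"
proof -
  have "f (inv s \<otimes> t) x = f (inv s) (f s x)" using is_act_mult[OF act] s t x eq by simp
  also have "\<dots> = x" using act_inv_cancel s x by simp
  finally have "inv s \<otimes> t \<in> act_stabilizer S f x" unfolding act_stabilizer_def using s t by simp
  then have fixed: "g (inv s \<otimes> t) y = y" using stab unfolding act_stabilizer_def by blast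
  have "s \<otimes> (inv s \<otimes> t) = t" using s t by (simp add: m_assoc[symmetric])
  then have "g t y = g s (g (inv s \<otimes> t) y)" using is_act_mult[OF actB, of s "inv s \<otimes> t" y] s t y
    by simp
  with fixed show ?thesis by simp
qed

text \<open>A map compatible with stabilizers is extended from a partial transversal of the orbits by
  \<open>\<phi> (s \<cdot> r) = s \<cdot> c r\<close> on the orbit of each representative \<open>r\<close>.\<close>
lemma exists_act_hom_extending:
  assumes actB: "is_act S B g" and c: "\<And>a. a \<in> A \<Longrightarrow> c a \<in> B"
    and stab: "\<And>a. a \<in> A \<Longrightarrow> act_stabilizer S f a \<subseteq> act_stabilizer S g (c a)"
    and "P \<subseteq> A" and "\<forall>p\<in>P. \<forall>q\<in>P. q \<in> act_orbit S f p \<longrightarrow> q = p"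
  shows "\<exists>\<phi>. is_act_hom S A f B g \<phi> \<and> (\<forall>p\<in>P. \<phi> p = c p)"
proof -
  obtain r where r_orbit: "\<And>a. a \<in> A \<Longrightarrow> r a \<in> act_orbit S f a"
    and r_invariant: "\<And>a s. a \<in> A \<Longrightarrow> s \<in> carrier S \<Longrightarrow> r (f s a) = r a"
    and r_P: "\<And>p. p \<in> P \<Longrightarrow> r p = p"
    using exists_orbit_transversal[OF assms(4,5)] by blast
  have rA: "r a \<in> A" if "a \<in> A" for a using r_orbit act_orbit_subset that by blast
  have "\<exists>s\<in>carrier S. f s (r a) = a" if "a \<in> A" for a
    using act_orbit_sym[OF that r_orbit[OF that]] unfolding act_orbit_def by (auto simp: eq_commute)
  then obtain \<sigma> where \<sigma>: "\<And>a. a \<in> A \<Longrightarrow> \<sigma> a \<in> carrier S \<and> f (\<sigma> a) (r a) = a"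
    by (metis (mono_tags))
  define \<phi> where "\<phi> a = g (\<sigma> a) (c (r a))" for a
  have "is_act_hom S A f B g \<phi>"
    unfolding is_act_hom_def
  proof (intro conjI ballI)
    fix a assume "a \<in> A"
    then show "\<phi> a \<in> B" unfolding \<phi>_def using is_act_closed[OF actB] \<sigma> c rA by blast
  next
    fix t a assume t: "t \<in> carrier S" and a: "a \<in> A"
    have ta: "f t a \<in> A" using is_act_closed[OF act] t a .
    have r_ta: "r (f t a) = r a" using r_invariant a t .
    have "f (\<sigma> (f t a)) (r a) = f (t \<otimes> \<sigma> a) (r a)"
      using \<sigma>[OF ta] \<sigma>[OF a] is_act_mult[OF act] t rA[OF a] r_ta by simp
    then have "g (\<sigma> (f t a)) (c (r a)) = g (t \<otimes> \<sigma> a) (c (r a))"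
      using act_hom_value_respects_action[OF actB rA[OF a] c[OF rA[OF a]] stab[OF rA[OF a]]]
        \<sigma>[OF ta] \<sigma>[OF a] t by blast
    then show "\<phi> (f t a) = g t (\<phi> a)"
      unfolding \<phi>_def r_ta using is_act_mult[OF actB] \<sigma>[OF a] t c rA[OF a] by simp
  qed
  moreover have "\<phi> p = c p" if p: "p \<in> P" for p
  proof -
    have pA: "p \<in> A" using p assms(4) by blast
    then have "\<sigma> p \<in> act_stabilizer S f p" using \<sigma>[OF pA] r_P[OF p] unfolding act_stabilizer_def
      by simp
    then show ?thesis using stab[OF pA] r_P[OF p] unfolding \<phi>_def act_stabilizer_def by auto
  qed
  ultimately show ?thesis by blast
qed

lemma exists_separating_act_hom:
  assumes actB: "is_act S B g" and c: "\<And>a. a \<in> A \<Longrightarrow> c a \<in> B"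
    and stab: "\<And>a. a \<in> A \<Longrightarrow> act_stabilizer S g (c a) = act_stabilizer S f a"
    and x: "x \<in> A" and y: "y \<in> A" and "x \<noteq> y"
    and distinct: "y \<notin> act_orbit S f x \<Longrightarrow> c x \<noteq> c y"
  shows "\<exists>\<phi>. is_act_hom S A f B g \<phi> \<and> \<phi> x \<noteq> \<phi> y"
proof (cases "y \<in> act_orbit S f x")
  case True
  then obtain s where s: "s \<in> carrier S" "y = f s x" unfolding act_orbit_def by auto
  have "\<exists>\<phi>. is_act_hom S A f B g \<phi> \<and> (\<forall>p\<in>{x}. \<phi> p = c p)"
    by (rule exists_act_hom_extending[OF actB c]) (use stab x in auto)
  then obtain \<phi> where \<phi>: "is_act_hom S A f B g \<phi>" "\<phi> x = c x" by auto
  have "s \<notin> act_stabilizer S g (c x)"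
    using stab[OF x] s \<open>x \<noteq> y\<close> unfolding act_stabilizer_def by auto
  then have "\<phi> y \<noteq> \<phi> x" using \<phi> s x unfolding is_act_hom_def act_stabilizer_def by auto
  with \<phi>(1) show ?thesis by metis
next
  case False
  then have "x \<notin> act_orbit S f y" using act_orbit_sym[OF y] by blast
  then have "\<exists>\<phi>. is_act_hom S A f B g \<phi> \<and> (\<forall>p\<in>{x, y}. \<phi> p = c p)"
    by (intro exists_act_hom_extending[OF actB c]) (use stab x y False in auto)
  then obtain \<phi> where "is_act_hom S A f B g \<phi>" "\<phi> x = c x" "\<phi> y = c y" by auto
  then show ?thesis using distinct False by metis
qed

end

section \<open>Separating homomorphisms and geometric equivalence\<close>

definition act_homs_separate :: "('s,'m) monoid_scheme \<Rightarrow> 'a set \<Rightarrow> ('s \<Rightarrow> 'a \<Rightarrow> 'a)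
    \<Rightarrow> 'b set \<Rightarrow> ('s \<Rightarrow> 'b \<Rightarrow> 'b) \<Rightarrow> bool" where
  "act_homs_separate S A f B g \<longleftrightarrow>
     (\<forall>a1\<in>A. \<forall>a2\<in>A. a1 \<noteq> a2 \<longrightarrow> (\<exists>\<phi>. is_act_hom S A f B g \<phi> \<and> \<phi> a1 \<noteq> \<phi> a2))"

lemma T_dprime_mono_if_homs_separate:
  assumes sep: "act_homs_separate S B g A f"
  shows "T_dprime S A f X T \<subseteq> T_dprime S B g X T"
proof
  fix pq assume pq: "pq \<in> T_dprime S A f X T"
  obtain p q where pq_def: "pq = (p, q)" by (cases pq)
  have pq_free: "p \<in> free_carrier S X" "q \<in> free_carrier S X"
    using pq pq_def unfolding T_dprime_def by auto
  have eq_A: "\<mu> p = \<mu> q" if "\<mu> \<in> T_prime S A f X T" for \<mu>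
    using pq pq_def that unfolding T_dprime_def act_ker_def by auto
  have "\<nu> p = \<nu> q" if \<nu>: "\<nu> \<in> T_prime S B g X T" for \<nu>
  proof (rule ccontr)
    assume ne: "\<nu> p \<noteq> \<nu> q"
    have hom: "is_act_hom S (free_carrier S X) (free_action S) B g \<nu>" and T: "T \<subseteq> act_ker S X \<nu>"
      using \<nu> unfolding T_prime_def by auto
    have "\<nu> p \<in> B" "\<nu> q \<in> B" using hom pq_free unfolding is_act_hom_def by auto
    then obtain \<phi> where \<phi>: "is_act_hom S B g A f \<phi>" "\<phi> (\<nu> p) \<noteq> \<phi> (\<nu> q)"
      using sep ne unfolding act_homs_separate_def by blast
    have "is_act_hom S (free_carrier S X) (free_action S) A f (\<phi> \<circ> \<nu>)"
      using hom \<phi>(1) unfolding is_act_hom_def by auto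
    moreover have "T \<subseteq> act_ker S X (\<phi> \<circ> \<nu>)" using T unfolding act_ker_def by auto
    ultimately have "\<phi> \<circ> \<nu> \<in> T_prime S A f X T" unfolding T_prime_def by auto
    from eq_A[OF this] \<phi>(2) show False by simp
  qed
  then show "pq \<in> T_dprime S B g X T"
    using pq_free pq_def unfolding T_dprime_def act_ker_def by auto
qed

lemma geom_equiv_if_homs_separate:
  assumes "act_homs_separate S A f B g" and "act_homs_separate S B g A f"
  shows "geom_equiv S A f B g"
  unfolding geom_equiv_def
  using T_dprime_mono_if_homs_separate[OF assms(1)] T_dprime_mono_if_homs_separate[OF assms(2)]
  by blast


section \<open>Fixed points as geometric invariants\<close>

lemma is_act_hom_free_extension:
  assumes "is_act S G g" and "\<forall>i\<in>X. b i \<in> G"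
  shows "is_act_hom S (free_carrier S X) (free_action S) G g (\<lambda>p. g (snd p) (b (fst p)))"
  unfolding is_act_hom_def free_carrier_def free_action_def
  using is_act_closed[OF assms(1)] is_act_mult[OF assms(1)] assms(2) by auto

lemma act_hom_free_apply:
  assumes "monoid S" and hom: "is_act_hom S (free_carrier S X) (free_action S) G g \<mu>"
    and "i \<in> X" "s \<in> carrier S"
  shows "\<mu> (i, s) = g s (\<mu> (i, \<one>\<^bsub>S\<^esub>))"
proof -
  have "(i, \<one>\<^bsub>S\<^esub>) \<in> free_carrier S X" unfolding free_carrier_def using assms(1,3) by simp
  then have "\<mu> (free_action S s (i, \<one>\<^bsub>S\<^esub>)) = g s (\<mu> (i, \<one>\<^bsub>S\<^esub>))"
    using hom assms(4) unfolding is_act_hom_def by blast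
  then show ?thesis unfolding free_action_def using assms(1,4) by simp
qed

lemma T_dprime_eq_full_iff:
  "T_dprime S G g X T = free_carrier S X \<times> free_carrier S X \<longleftrightarrow>
     (\<forall>\<mu>\<in>T_prime S G g X T. \<forall>p\<in>free_carrier S X. \<forall>q\<in>free_carrier S X. \<mu> p = \<mu> q)"
  unfolding T_dprime_def act_ker_def by blast

definition fixing_relation ::
    "('s,'m) monoid_scheme \<Rightarrow> nat set \<Rightarrow> ((nat \<times> 's) \<times> (nat \<times> 's)) set" where
  "fixing_relation S Y = {((i, s), (i, \<one>\<^bsub>S\<^esub>)) | i s. i \<in> Y \<and> s \<in> carrier S}"

lemma fixing_relation_subset:
  "monoid S \<Longrightarrow> Y \<subseteq> X \<Longrightarrow> fixing_relation S Y \<subseteq> free_carrier S X \<times> free_carrier S X"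
  unfolding fixing_relation_def free_carrier_def by auto

lemma T_prime_fixing_relation_iff:
  assumes "monoid S" and "Y \<subseteq> X"
  shows "\<mu> \<in> T_prime S G g X (fixing_relation S Y) \<longleftrightarrow>
    is_act_hom S (free_carrier S X) (free_action S) G g \<mu> \<and>
    (\<forall>i\<in>Y. \<mu> (i, \<one>\<^bsub>S\<^esub>) \<in> act_fixed_points S G g)"
proof (cases "is_act_hom S (free_carrier S X) (free_action S) G g \<mu>")
  case hom: True
  have "(i, \<one>\<^bsub>S\<^esub>) \<in> free_carrier S X" if "i \<in> Y" for i
    using that assms unfolding free_carrier_def by auto
  then have "\<mu> (i, \<one>\<^bsub>S\<^esub>) \<in> G" if "i \<in> Y" for i
    using hom that unfolding is_act_hom_def by blast
  moreover have "\<mu> (i, s) = g s (\<mu> (i, \<one>\<^bsub>S\<^esub>))" if "i \<in> Y" "s \<in> carrier S" for i s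
    using act_hom_free_apply[OF assms(1) hom] that assms(2) by blast
  ultimately show ?thesis
    using hom fixing_relation_subset[OF assms] unfolding T_prime_def act_ker_def
    by (auto simp: fixing_relation_def act_fixed_points_def subset_iff)
qed (simp add: T_prime_def)

lemma free_extension_in_T_prime:
  assumes "monoid S" "is_act S G g" "Y \<subseteq> X" "\<forall>i\<in>X. b i \<in> G"
    and "\<forall>i\<in>Y. b i \<in> act_fixed_points S G g"
  shows "(\<lambda>p. g (snd p) (b (fst p))) \<in> T_prime S G g X (fixing_relation S Y)"
  unfolding T_prime_fixing_relation_iff[OF assms(1,3)]
  using is_act_hom_free_extension[OF assms(2,4)] assms(3,5) is_act_one[OF assms(2)]
  by (auto simp: act_fixed_points_def)

lemma act_hom_free_constant_iff:
  assumes monoid: "monoid S" and hom: "is_act_hom S (free_carrier S X) (free_action S) G g \<mu>"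
  shows "(\<forall>p\<in>free_carrier S X. \<forall>q\<in>free_carrier S X. \<mu> p = \<mu> q) \<longleftrightarrow>
    (\<forall>i\<in>X. \<mu> (i, \<one>\<^bsub>S\<^esub>) \<in> act_fixed_points S G g) \<and>
    (\<forall>i\<in>X. \<forall>j\<in>X. \<mu> (i, \<one>\<^bsub>S\<^esub>) = \<mu> (j, \<one>\<^bsub>S\<^esub>))"
proof -
  have one: "\<one>\<^bsub>S\<^esub> \<in> carrier S" using monoid.one_closed[OF monoid] .
  have in_free: "(i, s) \<in> free_carrier S X \<longleftrightarrow> i \<in> X \<and> s \<in> carrier S" for i s
    unfolding free_carrier_def by simp
  have gen_in: "\<mu> (i, \<one>\<^bsub>S\<^esub>) \<in> G" if "i \<in> X" for i
  proof -
    have "(i, \<one>\<^bsub>S\<^esub>) \<in> free_carrier S X" using that one by (simp add: in_free)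
    then show ?thesis using hom unfolding is_act_hom_def by blast
  qed
  note value_at = act_hom_free_apply[OF monoid hom]
  show ?thesis
  proof
    assume const: "\<forall>p\<in>free_carrier S X. \<forall>q\<in>free_carrier S X. \<mu> p = \<mu> q"
    have "g s (\<mu> (i, \<one>\<^bsub>S\<^esub>)) = \<mu> (i, \<one>\<^bsub>S\<^esub>)" if "i \<in> X" "s \<in> carrier S" for i s
    proof -
      have "(i, s) \<in> free_carrier S X" "(i, \<one>\<^bsub>S\<^esub>) \<in> free_carrier S X"
        using that one by (simp_all add: in_free)
      then have "\<mu> (i, s) = \<mu> (i, \<one>\<^bsub>S\<^esub>)" using const by blast
      then show ?thesis using value_at[OF that] by simp
    qed
    moreover have "\<mu> (i, \<one>\<^bsub>S\<^esub>) = \<mu> (j, \<one>\<^bsub>S\<^esub>)" if "i \<in> X" "j \<in> X" for i j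
    proof -
      have "(i, \<one>\<^bsub>S\<^esub>) \<in> free_carrier S X" "(j, \<one>\<^bsub>S\<^esub>) \<in> free_carrier S X"
        using that one by (simp_all add: in_free)
      then show ?thesis using const by blast
    qed
    ultimately show "(\<forall>i\<in>X. \<mu> (i, \<one>\<^bsub>S\<^esub>) \<in> act_fixed_points S G g) \<and>
        (\<forall>i\<in>X. \<forall>j\<in>X. \<mu> (i, \<one>\<^bsub>S\<^esub>) = \<mu> (j, \<one>\<^bsub>S\<^esub>))"
      using gen_in unfolding act_fixed_points_def by blast
  next
    assume gens: "(\<forall>i\<in>X. \<mu> (i, \<one>\<^bsub>S\<^esub>) \<in> act_fixed_points S G g) \<and>
        (\<forall>i\<in>X. \<forall>j\<in>X. \<mu> (i, \<one>\<^bsub>S\<^esub>) = \<mu> (j, \<one>\<^bsub>S\<^esub>))"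
    have value_gen: "\<mu> (i, s) = \<mu> (i, \<one>\<^bsub>S\<^esub>)" if "i \<in> X" "s \<in> carrier S" for i s
    proof -
      have "\<mu> (i, \<one>\<^bsub>S\<^esub>) \<in> act_fixed_points S G g" using gens that(1) by blast
      then show ?thesis using value_at[OF that] that(2) unfolding act_fixed_points_def by simp
    qed
    show "\<forall>p\<in>free_carrier S X. \<forall>q\<in>free_carrier S X. \<mu> p = \<mu> q"
    proof (intro ballI)
      fix p q assume "p \<in> free_carrier S X" "q \<in> free_carrier S X"
      then obtain i s j t where "p = (i, s)" "q = (j, t)" and ij: "i \<in> X" "j \<in> X"
        and "s \<in> carrier S" "t \<in> carrier S"
        unfolding free_carrier_def by auto
      moreover have "\<mu> (i, \<one>\<^bsub>S\<^esub>) = \<mu> (j, \<one>\<^bsub>S\<^esub>)" using gens ij by blast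
      ultimately show "\<mu> p = \<mu> q" using value_gen[of i s] value_gen[of j t] by simp
    qed
  qed
qed

lemma T_dprime_fixing_relation_full_iff:
  assumes monoid: "monoid S" and act: "is_act S G g" and "Y \<subseteq> X"
  shows "T_dprime S G g X (fixing_relation S Y) = free_carrier S X \<times> free_carrier S X \<longleftrightarrow>
    (\<forall>b. (\<forall>i\<in>X. b i \<in> G) \<and> (\<forall>i\<in>Y. b i \<in> act_fixed_points S G g) \<longrightarrow>
       (\<forall>i\<in>X. b i \<in> act_fixed_points S G g) \<and> (\<forall>i\<in>X. \<forall>j\<in>X. b i = b j))"
  (is "?full \<longleftrightarrow> (\<forall>b. ?admissible b \<longrightarrow> ?constant b)")
  unfolding T_dprime_eq_full_iff
proof (intro iffI allI impI ballI)
  fix b assume full: "\<forall>\<mu>\<in>T_prime S G g X (fixing_relation S Y).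
      \<forall>p\<in>free_carrier S X. \<forall>q\<in>free_carrier S X. \<mu> p = \<mu> q"
    and b: "?admissible b"
  define \<mu> where "\<mu> = (\<lambda>p. g (snd p) (b (fst p)))"
  have \<mu>: "\<mu> \<in> T_prime S G g X (fixing_relation S Y)"
    unfolding \<mu>_def using free_extension_in_T_prime[OF monoid act \<open>Y \<subseteq> X\<close>, of b] b by blast
  then have hom: "is_act_hom S (free_carrier S X) (free_action S) G g \<mu>"
    using T_prime_fixing_relation_iff[OF monoid \<open>Y \<subseteq> X\<close>] by blast
  have gen: "\<mu> (i, \<one>\<^bsub>S\<^esub>) = b i" if "i \<in> X" for i
    unfolding \<mu>_def using is_act_one[OF act] b that by simp
  have "\<forall>p\<in>free_carrier S X. \<forall>q\<in>free_carrier S X. \<mu> p = \<mu> q" using full \<mu> by blast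
  then have "(\<forall>i\<in>X. \<mu> (i, \<one>\<^bsub>S\<^esub>) \<in> act_fixed_points S G g) \<and>
      (\<forall>i\<in>X. \<forall>j\<in>X. \<mu> (i, \<one>\<^bsub>S\<^esub>) = \<mu> (j, \<one>\<^bsub>S\<^esub>))"
    using act_hom_free_constant_iff[OF monoid hom] by blast
  then show "?constant b" using gen by (metis (no_types, lifting))
next
  fix \<mu> p q assume admissible_constant: "\<forall>b. ?admissible b \<longrightarrow> ?constant b"
    and \<mu>: "\<mu> \<in> T_prime S G g X (fixing_relation S Y)"
    and pq: "p \<in> free_carrier S X" "q \<in> free_carrier S X"
  from \<mu> have hom: "is_act_hom S (free_carrier S X) (free_action S) G g \<mu>"
    and "\<forall>i\<in>Y. \<mu> (i, \<one>\<^bsub>S\<^esub>) \<in> act_fixed_points S G g"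
    using T_prime_fixing_relation_iff[OF monoid \<open>Y \<subseteq> X\<close>] by blast+
  moreover have "\<forall>i\<in>X. \<mu> (i, \<one>\<^bsub>S\<^esub>) \<in> G"
    using hom monoid.one_closed[OF monoid] unfolding is_act_hom_def free_carrier_def by blast
  ultimately have "?constant (\<lambda>i. \<mu> (i, \<one>\<^bsub>S\<^esub>))"
    using admissible_constant[rule_format, of "\<lambda>i. \<mu> (i, \<one>\<^bsub>S\<^esub>)"] by blast
  then show "\<mu> p = \<mu> q" using act_hom_free_constant_iff[OF monoid hom] pq by blast
qed

lemma T_dprime_fixing_relation_single_full_iff:
  assumes "monoid S" "is_act S G g"
  shows "T_dprime S G g {0} (fixing_relation S {}) = free_carrier S {0} \<times> free_carrier S {0} \<longleftrightarrow>
    act_fixed_points S G g = G"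
  unfolding T_dprime_fixing_relation_full_iff[OF assms empty_subsetI]
proof
  assume admissible_constant: "\<forall>b. (\<forall>i\<in>{0::nat}. b i \<in> G) \<and> (\<forall>i\<in>{}. b i \<in> act_fixed_points S G g) \<longrightarrow>
    (\<forall>i\<in>{0}. b i \<in> act_fixed_points S G g) \<and> (\<forall>i\<in>{0}. \<forall>j\<in>{0}. b i = b j)"
  have "a \<in> act_fixed_points S G g" if "a \<in> G" for a
    using that admissible_constant[rule_format, of "\<lambda>_. a"] by simp
  then show "act_fixed_points S G g = G" unfolding act_fixed_points_def by blast
qed (simp add: act_fixed_points_def)

lemma T_dprime_fixing_relation_pair_full_iff:
  assumes "monoid S" "is_act S G g" "Y \<subseteq> {0, 1}"
  shows "T_dprime S G g {0, 1} (fixing_relation S Y) = free_carrier S {0, 1} \<times> free_carrier S {0, 1}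
    \<longleftrightarrow> (\<forall>x\<in>G. \<forall>y\<in>G. (0 \<in> Y \<longrightarrow> x \<in> act_fixed_points S G g) \<and> (1 \<in> Y \<longrightarrow> y \<in> act_fixed_points S G g)
          \<longrightarrow> x \<in> act_fixed_points S G g \<and> x = y)"
  unfolding T_dprime_fixing_relation_full_iff[OF assms]
proof (intro iffI ballI impI allI)
  fix x y
  assume admissible_constant:
    "\<forall>b. (\<forall>i\<in>{0::nat, 1}. b i \<in> G) \<and> (\<forall>i\<in>Y. b i \<in> act_fixed_points S G g) \<longrightarrow>
    (\<forall>i\<in>{0, 1}. b i \<in> act_fixed_points S G g) \<and> (\<forall>i\<in>{0, 1}. \<forall>j\<in>{0, 1}. b i = b j)"
    and "x \<in> G" "y \<in> G"
    and "(0 \<in> Y \<longrightarrow> x \<in> act_fixed_points S G g) \<and> (1 \<in> Y \<longrightarrow> y \<in> act_fixed_points S G g)"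
  moreover define b where "b = (\<lambda>i::nat. if i = 0 then x else y)"
  moreover have "b 0 = x" "b 1 = y" unfolding b_def by simp_all
  ultimately have "(\<forall>i\<in>{0::nat, 1}. b i \<in> G) \<and> (\<forall>i\<in>Y. b i \<in> act_fixed_points S G g)"
    using \<open>Y \<subseteq> {0, 1}\<close> by auto
  then have "(\<forall>i\<in>{0, 1}. b i \<in> act_fixed_points S G g) \<and> (\<forall>i\<in>{0, 1}. \<forall>j\<in>{0, 1}. b i = b j)"
    using admissible_constant by blast
  with \<open>b 0 = x\<close> \<open>b 1 = y\<close> show "x \<in> act_fixed_points S G g \<and> x = y" by blast
next
  fix b :: "nat \<Rightarrow> _"
  assume "\<forall>x\<in>G. \<forall>y\<in>G. (0 \<in> Y \<longrightarrow> x \<in> act_fixed_points S G g) \<and> (1 \<in> Y \<longrightarrow> y \<in> act_fixed_points S G g)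
          \<longrightarrow> x \<in> act_fixed_points S G g \<and> x = y"
    and "(\<forall>i\<in>{0, 1}. b i \<in> G) \<and> (\<forall>i\<in>Y. b i \<in> act_fixed_points S G g)"
  then have "b 0 \<in> act_fixed_points S G g" "b 0 = b 1" by auto
  then show "(\<forall>i\<in>{0, 1}. b i \<in> act_fixed_points S G g) \<and> (\<forall>i\<in>{0, 1}. \<forall>j\<in>{0, 1}. b i = b j)"
    by auto
qed

lemma act_fixed_points_empty_iff:
  assumes "is_act S G g"
  shows "act_fixed_points S G g = {} \<longleftrightarrow>
    act_fixed_points S G g \<noteq> G \<and> (\<forall>x\<in>act_fixed_points S G g. \<forall>y\<in>G. x = y)"
proof
  assume "act_fixed_points S G g \<noteq> G \<and> (\<forall>x\<in>act_fixed_points S G g. \<forall>y\<in>G. x = y)"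
  moreover have "act_fixed_points S G g \<subseteq> G" unfolding act_fixed_points_def by blast
  ultimately show "act_fixed_points S G g = {}" by (metis all_not_in_conv subsetI subset_antisym)
qed (use is_act_nonempty[OF assms] in simp)

lemma act_fixed_points_empty_iff_T_dprime:
  assumes "monoid S" "is_act S G g"
  shows "act_fixed_points S G g = {} \<longleftrightarrow>
    T_dprime S G g {0} (fixing_relation S {}) \<noteq> free_carrier S {0} \<times> free_carrier S {0} \<and>
    T_dprime S G g {0, 1} (fixing_relation S {0}) = free_carrier S {0, 1} \<times> free_carrier S {0, 1}"
proof -
  have "{0::nat} \<subseteq> {0, 1}" by simp
  moreover have "act_fixed_points S G g \<subseteq> G" unfolding act_fixed_points_def by blast
  ultimately show ?thesis
    unfolding act_fixed_points_empty_iff[OF assms(2)]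
      T_dprime_fixing_relation_single_full_iff[OF assms]
      T_dprime_fixing_relation_pair_full_iff[OF assms \<open>{0} \<subseteq> {0, 1}\<close>]
    by auto
qed

lemma act_fixed_points_subsingleton_iff_T_dprime:
  assumes "monoid S" "is_act S G g"
  shows "(\<forall>x\<in>act_fixed_points S G g. \<forall>y\<in>act_fixed_points S G g. x = y) \<longleftrightarrow>
    T_dprime S G g {0, 1} (fixing_relation S {0, 1}) =
      free_carrier S {0, 1} \<times> free_carrier S {0, 1}"
proof -
  have "act_fixed_points S G g \<subseteq> G" unfolding act_fixed_points_def by blast
  then show ?thesis
    unfolding T_dprime_fixing_relation_pair_full_iff[OF assms subset_refl]
    by auto
qed

lemma geom_equiv_T_dprime_fixing_relation:
  assumes "geom_equiv S A f B g" "monoid S" "Y \<subseteq> X" "finite X" "X \<noteq> {}"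
  shows "T_dprime S A f X (fixing_relation S Y) = T_dprime S B g X (fixing_relation S Y)"
  using assms(1,4,5) fixing_relation_subset[OF assms(2,3)] unfolding geom_equiv_def by blast

lemma geom_equiv_act_fixed_points:
  assumes "monoid S" "is_act S A f" "is_act S B g" "geom_equiv S A f B g"
  shows geom_equiv_act_fixed_points_empty_iff:
      "act_fixed_points S A f = {} \<longleftrightarrow> act_fixed_points S B g = {}"
    and geom_equiv_act_fixed_points_subsingleton_iff:
      "(\<forall>x\<in>act_fixed_points S A f. \<forall>y\<in>act_fixed_points S A f. x = y) \<longleftrightarrow>
       (\<forall>x\<in>act_fixed_points S B g. \<forall>y\<in>act_fixed_points S B g. x = y)"
  unfolding act_fixed_points_empty_iff_T_dprime[OF assms(1,2)]
    act_fixed_points_empty_iff_T_dprime[OF assms(1,3)]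
    act_fixed_points_subsingleton_iff_T_dprime[OF assms(1,2)]
    act_fixed_points_subsingleton_iff_T_dprime[OF assms(1,3)]
  using geom_equiv_T_dprime_fixing_relation[OF assms(4,1), of "{}" "{0}"]
    geom_equiv_T_dprime_fixing_relation[OF assms(4,1), of "{0}" "{0, 1}"]
    geom_equiv_T_dprime_fixing_relation[OF assms(4,1), of "{0, 1}" "{0, 1}"]
  by simp_all

section \<open>The acts of cosets\<close>

lemma (in comm_group) l_coset_fixed_iff:
  assumes H: "subgroup H G" and s: "s \<in> carrier G" and t: "t \<in> carrier G"
  shows "s <# (t <# H) = t <# H \<longleftrightarrow> s \<in> H"
proof -
  have H_carrier: "H \<subseteq> carrier G" using H subgroup.subset by blast
  have assoc: "s <# (t <# H) = (t \<otimes> s) <# H" using lcos_m_assoc[OF H_carrier s t] m_comm[OF s t]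
    by simp
  show ?thesis
  proof
    assume eq: "s <# (t <# H) = t <# H"
    have "t \<otimes> s \<in> (t \<otimes> s) <# H" unfolding l_coset_def using s t subgroup.one_closed[OF H] by force
    then have "t \<otimes> s \<in> t <# H" using eq assoc by simp
    then obtain h where "h \<in> H" "t \<otimes> s = t \<otimes> h" unfolding l_coset_def by blast
    then show "s \<in> H" using s t H_carrier by auto
  next
    assume "s \<in> H"
    then show "s <# (t <# H) = t <# H"
      using assoc lcos_m_assoc[OF H_carrier t s] coset_join3[OF s H] by simp
  qed
qed

lemma rep_carrier_iff:
  "x \<in> rep_carrier S K n \<longleftrightarrow>
     (\<exists>H t. H \<in> K \<and> t \<in> carrier S \<and> x = Inl (H, t <#\<^bsub>S\<^esub> H)) \<or> (\<exists>i<n. x = Inr i)"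
  unfolding rep_carrier_def by auto

lemma rep_carrier_cases:
  assumes "x \<in> rep_carrier S K n"
  obtains (coset) H t where "H \<in> K" "t \<in> carrier S" "x = Inl (H, t <#\<^bsub>S\<^esub> H)"
    | (point) i where "i < n" "x = Inr i"
  using assms unfolding rep_carrier_iff by blast

lemma rep_action_simps [simp]:
  "rep_action S s (Inl (H, C)) = Inl (H, s <#\<^bsub>S\<^esub> C)"
  "rep_action S s (Inr i) = Inr i"
  unfolding rep_action_def by simp_all

lemma is_act_rep:
  assumes "group S" and K: "\<forall>H\<in>K. subgroup H S" and "rep_carrier S K n \<noteq> {}"
  shows "is_act S (rep_carrier S K n) (rep_action S)"
proof -
  interpret group S by fact
  have "rep_action S s x \<in> rep_carrier S K n \<and> rep_action S \<one>\<^bsub>S\<^esub> x = x \<and>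
      (\<forall>u\<in>carrier S. rep_action S (s \<otimes>\<^bsub>S\<^esub> u) x = rep_action S s (rep_action S u x))"
    if s: "s \<in> carrier S" and x: "x \<in> rep_carrier S K n" for s x
    using x
  proof (cases rule: rep_carrier_cases)
    case (coset H t)
    have H_carrier: "H \<subseteq> carrier S" using K coset(1) subgroup.subset by blast
    then have "t <#\<^bsub>S\<^esub> H \<subseteq> carrier S" using l_coset_subset_G coset(2) by blast
    then show ?thesis
      using coset lcos_m_assoc[OF H_carrier s coset(2)] lcos_mult_one lcos_m_assoc s
      by (auto simp: rep_carrier_iff)
  qed (auto simp: rep_carrier_iff)
  then show ?thesis unfolding is_act_def using assms(3) by blast
qed

lemma act_stabilizer_rep_coset:
  assumes "comm_group S" "subgroup H S" "t \<in> carrier S"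
  shows "act_stabilizer S (rep_action S) (Inl (H, t <#\<^bsub>S\<^esub> H)) = H"
  using comm_group.l_coset_fixed_iff[OF assms(1,2) _ assms(3)] subgroup.subset[OF assms(2)]
  unfolding act_stabilizer_def by auto

lemma act_stabilizer_rep_point: "act_stabilizer S (rep_action S) (Inr i) = carrier S"
  unfolding act_stabilizer_def by simp

lemma act_fixed_points_rep:
  assumes "comm_group S" and K: "K \<subseteq> proper_subgroups S"
  shows "act_fixed_points S (rep_carrier S K n) (rep_action S) = Inr ` {..<n}"
proof (intro equalityI subsetI)
  fix x assume "x \<in> act_fixed_points S (rep_carrier S K n) (rep_action S)"
  then have x: "x \<in> rep_carrier S K n" and stab: "act_stabilizer S (rep_action S) x = carrier S"
    by (simp_all add: act_fixed_points_iff_stabilizer)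
  from x show "x \<in> Inr ` {..<n}"
  proof (cases rule: rep_carrier_cases)
    case (coset H t)
    then show ?thesis
      using stab K act_stabilizer_rep_coset[OF assms(1) _ coset(2)]
      unfolding proper_subgroups_def by auto
  qed auto
qed (auto simp: act_fixed_points_iff_stabilizer act_stabilizer_rep_point rep_carrier_iff)

lemma rep_coset_in_orbit:
  fixes S (structure)
  assumes "group S" "subgroup H S" "t \<in> carrier S" "u \<in> carrier S"
  shows "Inl (H, u <#\<^bsub>S\<^esub> H) \<in> act_orbit S (rep_action S) (Inl (H, t <#\<^bsub>S\<^esub> H))"
proof -
  interpret group S by fact
  have "u = (u \<otimes> inv t) \<otimes> t" using assms(3,4) by (simp add: m_assoc)
  then have "u <# H = (u \<otimes> inv t) <# (t <# H)"
    using lcos_m_assoc[OF subgroup.subset[OF assms(2)] _ assms(3), of "u \<otimes> inv t"] assms(3,4)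
      by simp
  then show ?thesis unfolding act_orbit_def using assms(3,4) by force
qed

section \<open>A coset act geometrically equivalent to a given act\<close>

context
  fixes S :: "('s,'m) monoid_scheme" (structure) and A :: "'a set" and f :: "'s \<Rightarrow> 'a \<Rightarrow> 'a"
  assumes comm: "comm_group S" and act: "is_act S A f"
begin

interpretation comm_group S by (rule comm)

definition proper_stabilizers :: "'s set set" where
  "proper_stabilizers = act_stabilizer S f ` (A - act_fixed_points S A f)"

definition capped_fixed_point_count :: nat where
  "capped_fixed_point_count =
    (if \<exists>x\<in>act_fixed_points S A f. \<exists>y\<in>act_fixed_points S A f. x \<noteq> y then 2
     else if act_fixed_points S A f \<noteq> {} then 1 else 0)"

lemma capped_fixed_point_count_less_3: "capped_fixed_point_count < 3"
  unfolding capped_fixed_point_count_def by simp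

abbreviation canonical_rep :: "('s set \<times> 's set + nat) set" where
  "canonical_rep \<equiv> rep_carrier S proper_stabilizers capped_fixed_point_count"

lemma proper_stabilizers_subset: "proper_stabilizers \<subseteq> proper_subgroups S"
proof
  fix H assume "H \<in> proper_stabilizers"
  then obtain a where "a \<in> A" "a \<notin> act_fixed_points S A f" "H = act_stabilizer S f a"
    unfolding proper_stabilizers_def by blast
  then show "H \<in> proper_subgroups S"
    using act_stabilizer_subgroup[OF is_group act]
    unfolding act_fixed_points_iff_stabilizer proper_subgroups_def by blast
qed

lemma subgroup_of_proper_stabilizer:
  "H \<in> proper_stabilizers \<Longrightarrow> subgroup H S \<and> H \<noteq> carrier S"
  using proper_stabilizers_subset unfolding proper_subgroups_def by blast

definition fixed_point_enum :: "nat \<Rightarrow> 'a" where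
  "fixed_point_enum = (SOME e. inj_on e {..<capped_fixed_point_count} \<and>
     e ` {..<capped_fixed_point_count} \<subseteq> act_fixed_points S A f)"

lemma fixed_point_enum:
  "inj_on fixed_point_enum {..<capped_fixed_point_count} \<and>
   fixed_point_enum ` {..<capped_fixed_point_count} \<subseteq> act_fixed_points S A f"
proof -
  have "\<exists>e. inj_on e {..<capped_fixed_point_count} \<and>
      e ` {..<capped_fixed_point_count} \<subseteq> act_fixed_points S A f"
  proof (cases "\<exists>x\<in>act_fixed_points S A f. \<exists>y\<in>act_fixed_points S A f. x \<noteq> y")
    case True
    then obtain x y where xy: "x \<in> act_fixed_points S A f" "y \<in> act_fixed_points S A f" "x \<noteq> y"
      by blast
    have "{..<capped_fixed_point_count} = {0, 1}"
      using True unfolding capped_fixed_point_count_def by auto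
    then show ?thesis using xy
      by (intro exI[of _ "\<lambda>i. if i = 0 then x else y"]) (simp add: inj_on_def)
  next
    case no_two: False
    show ?thesis
    proof (cases "act_fixed_points S A f = {}")
      case True
      then show ?thesis using no_two unfolding capped_fixed_point_count_def by simp
    next
      case False
      then obtain x where "x \<in> act_fixed_points S A f" by blast
      moreover have "capped_fixed_point_count = 1" using no_two False
        unfolding capped_fixed_point_count_def by simp
      ultimately show ?thesis by (intro exI[of _ "\<lambda>_. x"]) (simp add: One_nat_def lessThan_Suc)
    qed
  qed
  then show ?thesis unfolding fixed_point_enum_def by (rule someI_ex)
qed

definition point_with_stabilizer :: "'s set \<Rightarrow> 'a" where
  "point_with_stabilizer H = (SOME a. a \<in> A \<and> act_stabilizer S f a = H)"

lemma point_with_stabilizer: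
  assumes "H \<in> proper_stabilizers"
  shows "point_with_stabilizer H \<in> A \<and> act_stabilizer S f (point_with_stabilizer H) = H"
  unfolding point_with_stabilizer_def
  by (rule someI_ex) (use assms in \<open>auto simp: proper_stabilizers_def\<close>)

definition into_canonical_rep :: "'a \<Rightarrow> 's set \<times> 's set + nat" where
  "into_canonical_rep a = (if a \<in> act_fixed_points S A f then Inr 0
     else Inl (act_stabilizer S f a, act_stabilizer S f a))"

definition from_canonical_rep :: "'s set \<times> 's set + nat \<Rightarrow> 'a" where
  "from_canonical_rep x =
    (case x of Inl (H, C) \<Rightarrow> point_with_stabilizer H | Inr i \<Rightarrow> fixed_point_enum i)"

lemma stabilizer_coset_in_canonical_rep:
  assumes "a \<in> A" "a \<notin> act_fixed_points S A f" "t \<in> carrier S"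
  shows "act_stabilizer S f a \<in> proper_stabilizers"
    and "Inl (act_stabilizer S f a, t <# act_stabilizer S f a) \<in> canonical_rep"
    and "act_stabilizer S (rep_action S) (Inl (act_stabilizer S f a, t <# act_stabilizer S f a))
           = act_stabilizer S f a"
proof -
  show H: "act_stabilizer S f a \<in> proper_stabilizers"
    using assms(1,2) unfolding proper_stabilizers_def by blast
  then show "Inl (act_stabilizer S f a, t <# act_stabilizer S f a) \<in> canonical_rep"
    using assms(3) unfolding rep_carrier_iff by blast
  show "act_stabilizer S (rep_action S) (Inl (act_stabilizer S f a, t <# act_stabilizer S f a))
      = act_stabilizer S f a"
    using act_stabilizer_rep_coset[OF comm _ assms(3)] subgroup_of_proper_stabilizer[OF H] by blast
qed

lemma capped_fixed_point_count_pos: "a \<in> act_fixed_points S A f \<Longrightarrow> 0 < capped_fixed_point_count"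
  unfolding capped_fixed_point_count_def by auto

lemma into_canonical_rep:
  assumes "a \<in> A"
  shows "into_canonical_rep a \<in> canonical_rep"
    and "act_stabilizer S (rep_action S) (into_canonical_rep a) = act_stabilizer S f a"
proof -
  have "act_stabilizer S f a \<subseteq> carrier S" unfolding act_stabilizer_def by blast
  then have one_coset: "\<one> <# act_stabilizer S f a = act_stabilizer S f a" by (rule lcos_mult_one)
  show "into_canonical_rep a \<in> canonical_rep"
    using stabilizer_coset_in_canonical_rep(2)[OF assms _ one_closed] capped_fixed_point_count_pos
    unfolding into_canonical_rep_def one_coset by (auto simp: rep_carrier_iff)
  show "act_stabilizer S (rep_action S) (into_canonical_rep a) = act_stabilizer S f a"
  proof (cases "a \<in> act_fixed_points S A f")
    case True
    then show ?thesis
      unfolding into_canonical_rep_def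
      by (simp add: act_fixed_points_iff_stabilizer act_stabilizer_rep_point)
  next
    case False
    then show ?thesis
      using stabilizer_coset_in_canonical_rep(3)[OF assms False one_closed]
      unfolding into_canonical_rep_def one_coset by simp
  qed
qed

lemma is_act_canonical_rep: "is_act S canonical_rep (rep_action S)"
proof (rule is_act_rep[OF is_group])
  show "\<forall>H\<in>proper_stabilizers. subgroup H S" using subgroup_of_proper_stabilizer by blast
  obtain a where "a \<in> A" using is_act_nonempty[OF act] by blast
  then show "canonical_rep \<noteq> {}" using into_canonical_rep(1) by blast
qed

lemma from_canonical_rep:
  assumes "x \<in> canonical_rep"
  shows "from_canonical_rep x \<in> A \<and>
    act_stabilizer S f (from_canonical_rep x) = act_stabilizer S (rep_action S) x"
  using assms
proof (cases rule: rep_carrier_cases)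
  case (coset H t)
  then show ?thesis
    using point_with_stabilizer[OF coset(1)] subgroup_of_proper_stabilizer[OF coset(1)]
      act_stabilizer_rep_coset[OF comm _ coset(2)]
    unfolding from_canonical_rep_def by simp
next
  case (point i)
  then have "fixed_point_enum i \<in> act_fixed_points S A f" using fixed_point_enum by blast
  then show ?thesis
    using point unfolding from_canonical_rep_def
    by (simp add: act_fixed_points_iff_stabilizer act_stabilizer_rep_point)
qed

lemma two_canonical_rep_points_with_stabilizer:
  assumes a1: "a1 \<in> A" and a2: "a2 \<in> A" and "a1 \<noteq> a2"
    and stab_eq: "act_stabilizer S f a1 = act_stabilizer S f a2"
  obtains d1 d2 where "d1 \<in> canonical_rep" "d2 \<in> canonical_rep" "d1 \<noteq> d2"
    "act_stabilizer S (rep_action S) d1 = act_stabilizer S f a2"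
    "act_stabilizer S (rep_action S) d2 = act_stabilizer S f a2"
proof (cases "a2 \<in> act_fixed_points S A f")
  case True
  then have "a1 \<in> act_fixed_points S A f"
    using a1 stab_eq unfolding act_fixed_points_iff_stabilizer by simp
  then have "capped_fixed_point_count = 2"
    using True \<open>a1 \<noteq> a2\<close> unfolding capped_fixed_point_count_def by auto
  then show thesis
    using that[of "Inr 0" "Inr 1"] True
    by (simp add: rep_carrier_iff act_stabilizer_rep_point act_fixed_points_iff_stabilizer)
next
  case False
  let ?H = "act_stabilizer S f a2"
  have "?H \<noteq> carrier S" using False a2 unfolding act_fixed_points_iff_stabilizer by simp
  then obtain h where h: "h \<in> carrier S" "h \<notin> ?H" unfolding act_stabilizer_def by blast
  have "subgroup ?H S" using act_stabilizer_subgroup[OF is_group act a2] .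
  then have "h <# ?H \<noteq> \<one> <# ?H"
    using l_coset_fixed_iff[OF _ h(1) one_closed] h(2) lcos_mult_one[OF subgroup.subset] by metis
  then show thesis
    using that[of "Inl (?H, \<one> <# ?H)" "Inl (?H, h <# ?H)"]
      stabilizer_coset_in_canonical_rep(2,3)[OF a2 False] h(1) one_closed
    by simp
qed

lemma exists_stabilizer_preserving_map_separating:
  assumes a1: "a1 \<in> A" and a2: "a2 \<in> A" and "a1 \<noteq> a2"
  obtains c where "\<And>a. a \<in> A \<Longrightarrow> c a \<in> canonical_rep"
    "\<And>a. a \<in> A \<Longrightarrow> act_stabilizer S (rep_action S) (c a) = act_stabilizer S f a"
    "c a1 \<noteq> c a2"
proof (cases "into_canonical_rep a1 = into_canonical_rep a2")
  case False
  show thesis by (rule that[of into_canonical_rep]) (use into_canonical_rep False in auto)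
next
  case True
  then have "act_stabilizer S f a1 = act_stabilizer S f a2"
    using into_canonical_rep(2)[OF a1] into_canonical_rep(2)[OF a2] by simp
  then obtain d where d: "d \<in> canonical_rep"
    "act_stabilizer S (rep_action S) d = act_stabilizer S f a2"
    "d \<noteq> into_canonical_rep a1"
    using two_canonical_rep_points_with_stabilizer[OF a1 a2 \<open>a1 \<noteq> a2\<close>] by metis
  show thesis
    by (rule that[of "into_canonical_rep(a2 := d)"]) (use d into_canonical_rep \<open>a1 \<noteq> a2\<close> in auto)
qed

lemma act_homs_separate_into_canonical_rep: "act_homs_separate S A f canonical_rep (rep_action S)"
  unfolding act_homs_separate_def
proof (intro ballI impI)
  fix a1 a2 assume a: "a1 \<in> A" "a2 \<in> A" "a1 \<noteq> a2"
  obtain c where "\<And>a. a \<in> A \<Longrightarrow> c a \<in> canonical_rep"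
    "\<And>a. a \<in> A \<Longrightarrow> act_stabilizer S (rep_action S) (c a) = act_stabilizer S f a"
    "c a1 \<noteq> c a2"
    using exists_stabilizer_preserving_map_separating[OF a] by blast
  then show "\<exists>\<phi>. is_act_hom S A f canonical_rep (rep_action S) \<phi> \<and> \<phi> a1 \<noteq> \<phi> a2"
    using exists_separating_act_hom[OF is_group act is_act_canonical_rep] a by blast
qed

lemma from_canonical_rep_distinct:
  assumes x1: "x1 \<in> canonical_rep" and x2: "x2 \<in> canonical_rep" and "x1 \<noteq> x2"
    and not_orbit: "x2 \<notin> act_orbit S (rep_action S) x1"
  shows "from_canonical_rep x1 \<noteq> from_canonical_rep x2"
proof
  assume eq: "from_canonical_rep x1 = from_canonical_rep x2"
  then have stab_eq: "act_stabilizer S (rep_action S) x1 = act_stabilizer S (rep_action S) x2"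
    using from_canonical_rep[OF x1] from_canonical_rep[OF x2] by simp
  from x1 show False
  proof (cases rule: rep_carrier_cases)
    case (coset H1 t1)
    note x1_coset = coset
    have H1: "act_stabilizer S (rep_action S) x1 = H1" "H1 \<noteq> carrier S"
      using x1_coset act_stabilizer_rep_coset[OF comm] subgroup_of_proper_stabilizer by auto
    from x2 show False
    proof (cases rule: rep_carrier_cases)
      case (coset H2 t2)
      then have "H1 = H2"
        using stab_eq H1(1) act_stabilizer_rep_coset[OF comm] subgroup_of_proper_stabilizer by auto
      then show False
        using not_orbit rep_coset_in_orbit[OF is_group _ x1_coset(2) coset(2)] x1_coset coset
          subgroup_of_proper_stabilizer
        by auto
    next
      case (point j)
      then show False using stab_eq H1 by (simp add: act_stabilizer_rep_point)
    qed
  next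
    case (point i)
    note x1_point = point
    from x2 show False
    proof (cases rule: rep_carrier_cases)
      case (coset H2 t2)
      then show False
        using stab_eq x1_point act_stabilizer_rep_coset[OF comm] subgroup_of_proper_stabilizer
        by (auto simp: act_stabilizer_rep_point)
    next
      case (point j)
      then have "i = j"
        using eq x1_point fixed_point_enum unfolding from_canonical_rep_def by (auto dest: inj_onD)
      then show False using point x1_point \<open>x1 \<noteq> x2\<close> by simp
    qed
  qed
qed

lemma act_homs_separate_from_canonical_rep: "act_homs_separate S canonical_rep (rep_action S) A f"
  unfolding act_homs_separate_def
proof (intro ballI impI)
  fix x1 x2 assume x: "x1 \<in> canonical_rep" "x2 \<in> canonical_rep" "x1 \<noteq> x2"
  show "\<exists>\<phi>. is_act_hom S canonical_rep (rep_action S) A f \<phi> \<and> \<phi> x1 \<noteq> \<phi> x2"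
    by (rule exists_separating_act_hom[OF is_group is_act_canonical_rep act,
          where c = from_canonical_rep])
      (use from_canonical_rep from_canonical_rep_distinct x in auto)
qed

lemma geom_equiv_canonical_rep: "geom_equiv S A f canonical_rep (rep_action S)"
  using geom_equiv_if_homs_separate[OF act_homs_separate_into_canonical_rep
      act_homs_separate_from_canonical_rep] .

end

section \<open>Uniqueness of the number of one-point summands\<close>

lemma Inr_image_lessThan_subsingleton_iff:
  "(\<forall>x\<in>Inr ` {..<n}. \<forall>y\<in>Inr ` {..<n}. x = y) \<longleftrightarrow> n \<le> (1::nat)"
proof
  assume "\<forall>x\<in>Inr ` {..<n}. \<forall>y\<in>Inr ` {..<n}. x = y"
  then have "\<not> 1 < n"
    by (metis Inr_inject lessThan_iff image_eqI zero_less_one zero_neq_one order.strict_trans)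
  then show "n \<le> 1" by simp
qed auto

lemma geom_equiv_rep_index_unique:
  assumes comm: "comm_group S" and act: "is_act S A f"
    and K: "K \<subseteq> proper_subgroups S" "is_act S (rep_carrier S K n) (rep_action S)"
      "geom_equiv S A f (rep_carrier S K n) (rep_action S)"
    and L: "L \<subseteq> proper_subgroups S" "is_act S (rep_carrier S L m) (rep_action S)"
      "geom_equiv S A f (rep_carrier S L m) (rep_action S)"
    and "n < 3" "m < 3"
  shows "n = m"
proof -
  have monoid: "monoid S" using comm by (simp add: comm_group_def group_def)
  note fixed_n = act_fixed_points_rep[OF comm K(1), of n]
    and fixed_m = act_fixed_points_rep[OF comm L(1), of m]
  have "n = 0 \<longleftrightarrow> m = 0"
    using geom_equiv_act_fixed_points_empty_iff[OF monoid act K(2,3)]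
      geom_equiv_act_fixed_points_empty_iff[OF monoid act L(2,3)]
    unfolding fixed_n fixed_m by (simp add: lessThan_empty_iff)
  moreover have "n \<le> 1 \<longleftrightarrow> m \<le> 1"
    using geom_equiv_act_fixed_points_subsingleton_iff[OF monoid act K(2,3)]
      geom_equiv_act_fixed_points_subsingleton_iff[OF monoid act L(2,3)]
    unfolding fixed_n fixed_m Inr_image_lessThan_subsingleton_iff by simp
  ultimately show "n = m" using \<open>n < 3\<close> \<open>m < 3\<close> by auto
qed

theorem theorem3p22:
  fixes S :: "('s,'m) monoid_scheme" and A :: "'a set" and f :: "'s \<Rightarrow> 'a \<Rightarrow> 'a"
  assumes "comm_group S" and "is_act S A f"
  shows "\<exists>!n::nat. n < 3 \<and> (\<exists>K. K \<subseteq> proper_subgroups S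
            \<and> is_act S (rep_carrier S K n) (rep_action S)
            \<and> geom_equiv S A f (rep_carrier S K n) (rep_action S))"
proof (rule ex_ex1I)
  show "\<exists>n::nat. n < 3 \<and> (\<exists>K. K \<subseteq> proper_subgroups S
            \<and> is_act S (rep_carrier S K n) (rep_action S)
            \<and> geom_equiv S A f (rep_carrier S K n) (rep_action S))"
    using capped_fixed_point_count_less_3[OF assms] proper_stabilizers_subset[OF assms]
      is_act_canonical_rep[OF assms] geom_equiv_canonical_rep[OF assms]
    by blast
qed (use geom_equiv_rep_index_unique[OF assms] in blast)

end
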